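(* Let $A$ be a closed invariant subspace of $C(\mathbb{Z}^d)\otimes\mathbb{C}^r$, and let $A_+\subseteq C(\mathbb{Z}^d_+)\otimes\mathbb{C}^r$ be the set of restrictions to $\mathbb{Z}^d_+$ of elements of $A$. Let $\mathcal{P}$ be an invariant linear space of vectorial $pg$-sequences contained in $A$ whose restrictions to $\mathbb{Z}^d_+$ form a dense subset of $A_+$. Then $\mathcal{P}$ is dense in $A$.
   Context: $C(\mathbb{Z}^d)\otimes\mathbb{C}^r$ (resp. $C(\mathbb{Z}^d_+)\otimes\mathbb{C}^r$) is the space of all functions $\mathbb{Z}^d\to\mathbb{C}^r$ (resp. $\mathbb{Z}^d_+\to\mathbb{C}^r$) with the topology of coordinatewise convergence. Shifts: $(W_iu)(k)=u(k-e_i)$; a subspace is invariant if $W_i$ maps it onto itself for each $i$. A vectorial $pg$-sequence is a function $k\mapsto\omega^kh(k)$ with $\omega\in(\mathbb{C}\setminus\{0\})^d$, $\omega^k=\prod_i\omega_i^{k_i}$, and $h\in\mathbb{C}[z_1,\dots,z_d]\otimes\mathbb{C}^r$. *)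

theory Defs
  imports "HOL-Analysis.Analysis"
begin

text \<open>The type int^'d => complex^'r carries the product topology (instance from
  Function_Topology), i.e. the topology of coordinatewise convergence.\<close>

type_synonym ('d, 'r) seq = "int ^ 'd \<Rightarrow> complex ^ 'r"

definition shift :: "'d \<Rightarrow> ('d::finite, 'r::finite) seq \<Rightarrow> ('d, 'r) seq" where
  "shift i u = (\<lambda>k. u (k - axis i 1))"

definition invariant :: "('d::finite, 'r::finite) seq set \<Rightarrow> bool" where
  "invariant S \<longleftrightarrow> (\<forall>i. shift i ` S = S)"

definition clinear_space :: "('d::finite, 'r::finite) seq set \<Rightarrow> bool" where
  "clinear_space S \<longleftrightarrow> (\<lambda>k. 0) \<in> S \<and> (\<forall>u\<in>S. \<forall>v\<in>S. (\<lambda>k. u k + v k) \<in> S)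
      \<and> (\<forall>c::complex. \<forall>u\<in>S. (\<lambda>k. c *s u k) \<in> S)"

text \<open>Vectorial pg-sequence: k |-> omega^k h(k), omega in (C\{0})^d, h a C^r-valued
  polynomial in d variables, written as a finite sum of monomials with vector coefficients.\<close>
definition pg_seq :: "('d::finite, 'r::finite) seq \<Rightarrow> bool" where
  "pg_seq u \<longleftrightarrow> (\<exists>(\<omega>::complex^'d) (S::(nat^'d) set) (c::nat^'d \<Rightarrow> complex^'r).
      (\<forall>i. \<omega> $ i \<noteq> 0) \<and> finite S \<and>
      u = (\<lambda>k. (\<Prod>i\<in>UNIV. (\<omega> $ i) powi (k $ i)) *s
               (\<Sum>\<alpha>\<in>S. (\<Prod>i\<in>UNIV. (of_int (k $ i) :: complex) ^ (\<alpha> $ i)) *s c \<alpha>)))"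

text \<open>A function on Z^d_+ is represented by its extension
  by 0 outside Z^d_+; the set of such functions is closed in the product topology and its
  subspace topology is the product topology of C(Z^d_+) (x) C^r.\<close>
definition Zplus :: "(int ^ 'd) set" where
  "Zplus = {k. \<forall>i. k $ i \<ge> 0}"

definition restr :: "('d::finite, 'r::finite) seq \<Rightarrow> ('d, 'r) seq" where
  "restr u = (\<lambda>k. if k \<in> Zplus then u k else 0)"

end

theory Submission
  imports Defs
begin

text \<open>A neighbourhood in the topology of coordinatewise convergence constrains only finitely
  many coordinates, and a translation moves any finite subset of \<open>\<int>\<^sup>d\<close> into \<open>\<int>\<^sup>d\<^sub>+\<close>.
  To approximate \<open>u \<in> A\<close> on a finite set \<open>F\<close>, translate \<open>u\<close> by \<open>t\<close> so that \<open>F + t \<subseteq> \<int>\<^sup>d\<^sub>+\<close>,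
  approximate the restriction of the translate there by the restriction of some \<open>p \<in> P\<close>,
  and translate \<open>p\<close> back.\<close>

definition translate :: "int ^ 'd \<Rightarrow> ('d::finite, 'r::finite) seq \<Rightarrow> ('d, 'r) seq" where
  "translate t u = (\<lambda>k. u (k - t))"

lemma translate_0 [simp]: "translate 0 u = u"
  by (simp add: translate_def)

lemma translate_add: "translate (a + b) u = translate b (translate a u)"
  by (simp add: translate_def algebra_simps)

lemma shift_eq_translate: "shift i = translate (axis i 1)"
  by (simp add: fun_eq_iff shift_def translate_def)

lemma axis_add: "axis i (a + b) = axis i a + axis i (b :: 'a::monoid_add)"
  by (auto simp: vec_eq_iff axis_def)

lemma invariant_translate_axis:
  assumes "invariant S" and "u \<in> S"
  shows "translate (axis i m) u \<in> S"
  using assms(2)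
proof (induction m arbitrary: u rule: int_induct[where k = 0])
  case base
  then show ?case by (metis axis_eq_0_iff translate_0)
next
  case (step1 m)
  have "translate (axis i (m + 1)) u = shift i (translate (axis i m) u)"
    by (simp add: axis_add translate_add shift_eq_translate)
  moreover have "shift i ` S = S"
    using assms(1) by (simp add: invariant_def)
  ultimately show ?case
    using step1 by blast
next
  case (step2 m)
  obtain v where v: "v \<in> S" "u = shift i v"
    using \<open>u \<in> S\<close> assms(1) by (metis imageE invariant_def)
  have "translate (axis i (m - 1)) u = translate (axis i (1 + (m - 1))) v"
    by (simp only: v(2) axis_add translate_add shift_eq_translate)
  then show ?case
    using step2.IH[OF v(1)] by simp
qed

lemma invariant_translate:
  assumes "invariant S" and "u \<in> S"
  shows "translate t u \<in> S"
proof -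
  have "translate (\<Sum>i\<in>F. axis i (t $ i)) u \<in> S" if "finite F" for F
    using that assms(2)
  proof (induction F arbitrary: u rule: finite_induct)
    case (insert i F)
    then show ?case
      by (simp add: translate_add invariant_translate_axis[OF assms(1)])
  qed simp
  moreover have "(\<Sum>i\<in>UNIV. axis i (t $ i)) = t"
    by (simp add: vec_eq_iff axis_def)
  ultimately show ?thesis
    by (metis finite)
qed

lemma closure_fun_approx:
  fixes u :: "'a \<Rightarrow> 'b::topological_space"
  assumes "u \<in> closure P" and "finite F" and "\<And>k. k \<in> F \<Longrightarrow> open (X k)"
    and "\<And>k. k \<in> F \<Longrightarrow> u k \<in> X k"
  shows "\<exists>p\<in>P. \<forall>k\<in>F. p k \<in> X k"
proof -
  define Y where "Y k = (if k \<in> F then X k else UNIV)" for k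
  have "open (Pi\<^sub>E UNIV Y)"
    by (rule open_PiE) (use assms(2,3) in \<open>auto simp: Y_def intro: finite_subset\<close>)
  moreover have "u \<in> Pi\<^sub>E UNIV Y"
    using assms(4) by (simp add: Y_def PiE_iff)
  ultimately obtain p where "p \<in> P" "p \<in> Pi\<^sub>E UNIV Y"
    using assms(1) by (meson closure_iff_nhds_not_empty disjoint_iff order_refl)
  then show ?thesis
    by (metis PiE_iff UNIV_I Y_def)
qed

lemma closure_funI:
  fixes u :: "'a \<Rightarrow> 'b::topological_space"
  assumes "\<And>F X. finite F \<Longrightarrow> (\<And>k. k \<in> F \<Longrightarrow> open (X k)) \<Longrightarrow> (\<And>k. k \<in> F \<Longrightarrow> u k \<in> X k)
      \<Longrightarrow> \<exists>p\<in>P. \<forall>k\<in>F. p k \<in> X k"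
  shows "u \<in> closure P"
  unfolding closure_iff_nhds_not_empty
proof (intro allI impI)
  fix B S assume "S \<subseteq> B" "open S" "u \<in> S"
  then have "openin (product_topology (\<lambda>_. euclidean) UNIV) S"
    by (simp add: open_fun_def)
  from product_topology_open_contains_basis[OF this \<open>u \<in> S\<close>]
  obtain X where X: "u \<in> Pi\<^sub>E UNIV X" "\<And>k. open (X k)" "finite {k. X k \<noteq> UNIV}"
    "Pi\<^sub>E UNIV X \<subseteq> S"
    by auto
  obtain p where "p \<in> P" "\<forall>k\<in>{k. X k \<noteq> UNIV}. p k \<in> X k"
    using assms[of "{k. X k \<noteq> UNIV}" X] X(1-3) by (auto simp: PiE_iff)
  then have "p \<in> Pi\<^sub>E UNIV X"
    by (auto simp: PiE_iff)
  then show "P \<inter> B \<noteq> {}"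
    using \<open>p \<in> P\<close> X(4) \<open>S \<subseteq> B\<close> by blast
qed

lemma finite_translate_into_Zplus:
  fixes F :: "(int ^ 'd::finite) set"
  assumes "finite F"
  shows "\<exists>t. \<forall>k\<in>F. k + t \<in> Zplus"
proof
  define t :: "int ^ 'd" where "t = (\<chi> i. \<Sum>k\<in>F. \<bar>k $ i\<bar>)"
  have bound: "\<bar>k $ i\<bar> \<le> t $ i" if "k \<in> F" for k i
    unfolding t_def using member_le_sum[OF that, of "\<lambda>k. \<bar>k $ i\<bar>"] assms by simp
  have "0 \<le> (k + t) $ i" if "k \<in> F" for k i
    using bound[OF that, of i] by simp
  then show "\<forall>k\<in>F. k + t \<in> Zplus"
    by (simp add: Zplus_def)
qed

theorem lemma4p9:
  fixes A P :: "('d::finite, 'r::finite) seq set"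
  assumes "closed A" and "clinear_space A" and "invariant A"
    and "clinear_space P" and "invariant P"
    and "\<forall>u\<in>P. pg_seq u" and "P \<subseteq> A"
    and "restr ` A \<subseteq> closure (restr ` P)"
  shows "A \<subseteq> closure P"
proof
  fix u assume "u \<in> A"
  show "u \<in> closure P"
  proof (rule closure_funI)
    fix F X assume "finite F" and X: "\<And>k. k \<in> F \<Longrightarrow> open (X k)" "\<And>k. k \<in> F \<Longrightarrow> u k \<in> X k"
    obtain t where t: "\<forall>k\<in>F. k + t \<in> Zplus"
      using finite_translate_into_Zplus[OF \<open>finite F\<close>] by blast
    have "\<exists>q\<in>restr ` P. \<forall>k\<in>(\<lambda>k. k + t) ` F. q k \<in> X (k - t)"
    proof (rule closure_fun_approx)
      show "restr (translate t u) \<in> closure (restr ` P)"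
        using assms(8) invariant_translate[OF assms(3) \<open>u \<in> A\<close>] by blast
    qed (use \<open>finite F\<close> X t in \<open>auto simp: restr_def translate_def\<close>)
    then obtain p where "p \<in> P" and p: "\<forall>k\<in>F. restr p (k + t) \<in> X k"
      by auto
    have "translate (- t) p \<in> P"
      using invariant_translate[OF assms(5) \<open>p \<in> P\<close>] .
    moreover have "\<forall>k\<in>F. translate (- t) p k \<in> X k"
      using p t by (auto simp: restr_def translate_def)
    ultimately show "\<exists>q\<in>P. \<forall>k\<in>F. q k \<in> X k"
      by blast
  qed
qed

end
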